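(* For a positive integer $k$, every graph $H$ with $|E(H)|\le\frac{1}{2}k(k+1)$ has an almost $k$-coloring.
   Context: A (proper) coloring $c$ of a graph $H$ is an almost $k$-coloring if either $c$ is a $k$-coloring of $H$ (uses at most $k$ colors), or $c$ is a $(k+1)$-coloring of $H$ in which at least one color class is a singleton set. *)

theory Defs
  imports Main
begin

definition graph :: "'a set \<Rightarrow> 'a set set \<Rightarrow> bool" where
  "graph V E \<longleftrightarrow> finite V \<and> (\<forall>e\<in>E. e \<subseteq> V \<and> card e = 2)"

definition proper_coloring :: "'a set \<Rightarrow> 'a set set \<Rightarrow> ('a \<Rightarrow> nat) \<Rightarrow> bool" where
  "proper_coloring V E c \<longleftrightarrow> (\<forall>u\<in>V. \<forall>v\<in>V. {u, v} \<in> E \<longrightarrow> c u \<noteq> c v)"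

definition k_coloring :: "nat \<Rightarrow> 'a set \<Rightarrow> 'a set set \<Rightarrow> ('a \<Rightarrow> nat) \<Rightarrow> bool" where
  "k_coloring k V E c \<longleftrightarrow> proper_coloring V E c \<and> card (c ` V) \<le> k"

definition color_class :: "'a set \<Rightarrow> ('a \<Rightarrow> nat) \<Rightarrow> nat \<Rightarrow> 'a set" where
  "color_class V c x = {v \<in> V. c v = x}"

definition almost_k_coloring :: "nat \<Rightarrow> 'a set \<Rightarrow> 'a set set \<Rightarrow> ('a \<Rightarrow> nat) \<Rightarrow> bool" where
  "almost_k_coloring k V E c \<longleftrightarrow>
     k_coloring k V E c \<or>
     (k_coloring (k + 1) V E c \<and> (\<exists>x\<in>c ` V. card (color_class V c x) = 1))"

end

theory Submission
  imports Defs
begin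

text \<open>
  Take a proper colouring c with the least possible number n of colours. Two colour classes
  not joined by an edge could be merged, so every pair of colours is the colour pair of some edge
  and n choose 2 \<le> |E| \<le> (k+1) choose 2. Hence n \<le> k, or n = k + 1 and each pair of colours
  is the colour pair of exactly one edge. In the latter case, among all such colourings with a
  chosen colour x, minimise the size of the class of x. If that class had two vertices w1, w2,
  take another colour y: only one edge joins the classes of x and y, so one of w1, w2 has no
  neighbour of colour y and can be recoloured y, shrinking the class of x without losing a colour.
\<close>

definition minimum_coloring :: "'a set \<Rightarrow> 'a set set \<Rightarrow> ('a \<Rightarrow> nat) \<Rightarrow> bool" where
  "minimum_coloring V E c \<longleftrightarrow>
     proper_coloring V E c \<and> (\<forall>c'. proper_coloring V E c' \<longrightarrow> card (c ` V) \<le> card (c' ` V))"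

lemma card_ge_2_ex_other:
  assumes "finite A" "card A \<ge> 2" "x \<in> A"
  shows "\<exists>y\<in>A. y \<noteq> x"
proof (rule ccontr)
  assume "\<not> ?thesis"
  then have "A \<subseteq> {x}" by blast
  then show False
    using assms(2) card_mono[of "{x}" A] by simp
qed

lemma graph_finite_edges: "graph V E \<Longrightarrow> finite E"
  unfolding graph_def by (metis Pow_iff finite_Pow_iff finite_subset subsetI)

lemma proper_coloring_inj_on:
  assumes "graph V E" "inj_on c V"
  shows "proper_coloring V E c"
  unfolding proper_coloring_def
proof (intro ballI impI)
  fix u v assume "u \<in> V" "v \<in> V" "{u, v} \<in> E"
  moreover from this have "u \<noteq> v"
    using assms(1) unfolding graph_def by fastforce
  ultimately show "c u \<noteq> c v"
    using assms(2) by (auto dest: inj_onD)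
qed

lemma minimum_coloring_exists:
  assumes "graph V E"
  shows "\<exists>c. minimum_coloring V E c"
proof -
  have "finite V"
    using assms unfolding graph_def by simp
  then obtain f :: "'a \<Rightarrow> nat" where "inj_on f V"
    using finite_imp_inj_to_nat_seg by blast
  then have "proper_coloring V E f"
    by (rule proper_coloring_inj_on[OF assms])
  then show ?thesis
    using ex_has_least_nat[of "proper_coloring V E" f "\<lambda>c. card (c ` V)"]
    unfolding minimum_coloring_def by blast
qed

lemma proper_coloring_merge_colors:
  assumes "finite V" "proper_coloring V E c"
    and "x \<in> c ` V" "y \<in> c ` V" "x \<noteq> y"
    and no_edge: "\<not> (\<exists>u\<in>V. \<exists>v\<in>V. {u, v} \<in> E \<and> c u = x \<and> c v = y)"
  shows "\<exists>c'. proper_coloring V E c' \<and> card (c' ` V) < card (c ` V)"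
proof -
  define c' where "c' = (\<lambda>v. if c v = y then x else c v)"
  have "proper_coloring V E c'"
    unfolding proper_coloring_def
  proof (intro ballI impI)
    fix u v assume uv: "u \<in> V" "v \<in> V" "{u, v} \<in> E"
    then have "c u \<noteq> c v" "{v, u} \<in> E"
      using assms(2) by (auto simp: proper_coloring_def insert_commute)
    then show "c' u \<noteq> c' v"
      using no_edge uv unfolding c'_def by (auto split: if_splits)
  qed
  moreover have "card (c' ` V) \<le> card (c ` V - {y})"
    using assms(1,3,5) unfolding c'_def by (intro card_mono) auto
  moreover have "card (c ` V - {y}) < card (c ` V)"
    using assms(1,4) by (intro card_Diff1_less) auto
  ultimately show ?thesis by force
qed

lemma proper_coloring_fun_upd:
  assumes "proper_coloring V E c" "\<forall>u\<in>V. {w, u} \<in> E \<longrightarrow> c u \<noteq> y"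
  shows "proper_coloring V E (c(w := y))"
  unfolding proper_coloring_def
proof (intro ballI impI)
  fix u v assume uv: "u \<in> V" "v \<in> V" "{u, v} \<in> E"
  then have "c u \<noteq> c v" "{v, u} \<in> E"
    using assms(1) by (auto simp: proper_coloring_def insert_commute)
  then show "(c(w := y)) u \<noteq> (c(w := y)) v"
    using assms(2) uv by auto
qed

lemma proper_coloring_edge_colors:
  assumes "graph V E" "proper_coloring V E c"
  shows "(\<lambda>e. c ` e) ` E \<subseteq> {B. B \<subseteq> c ` V \<and> card B = 2}"
proof
  fix B assume "B \<in> (\<lambda>e. c ` e) ` E"
  then obtain u v where "{u, v} \<in> E" "u \<noteq> v" "B = {c u, c v}"
    using assms(1) unfolding graph_def by (auto simp: card_2_iff)
  moreover have "u \<in> V" "v \<in> V"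
    using \<open>{u, v} \<in> E\<close> assms(1) unfolding graph_def by auto
  ultimately show "B \<in> {B. B \<subseteq> c ` V \<and> card B = 2}"
    using assms(2) unfolding proper_coloring_def by auto
qed

lemma minimum_coloring_edge_colors:
  assumes "graph V E" "minimum_coloring V E c"
  shows "(\<lambda>e. c ` e) ` E = {B. B \<subseteq> c ` V \<and> card B = 2}"
proof
  have proper: "proper_coloring V E c"
    and least: "\<And>c'. proper_coloring V E c' \<Longrightarrow> card (c ` V) \<le> card (c' ` V)"
    using assms(2) unfolding minimum_coloring_def by auto
  show "(\<lambda>e. c ` e) ` E \<subseteq> {B. B \<subseteq> c ` V \<and> card B = 2}"
    using assms(1) proper by (rule proper_coloring_edge_colors)
  show "{B. B \<subseteq> c ` V \<and> card B = 2} \<subseteq> (\<lambda>e. c ` e) ` E"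
  proof
    fix B assume "B \<in> {B. B \<subseteq> c ` V \<and> card B = 2}"
    then obtain x y where B: "B = {x, y}" "x \<noteq> y" "x \<in> c ` V" "y \<in> c ` V"
      by (auto simp: card_2_iff)
    have "\<exists>u\<in>V. \<exists>v\<in>V. {u, v} \<in> E \<and> c u = x \<and> c v = y"
    proof (rule ccontr)
      assume "\<not> ?thesis"
      moreover have "finite V"
        using assms(1) unfolding graph_def by simp
      ultimately obtain c' where "proper_coloring V E c'" "card (c' ` V) < card (c ` V)"
        using proper_coloring_merge_colors[OF _ proper B(3,4,2)] by blast
      then show False
        using least by fastforce
    qed
    then obtain u v where "{u, v} \<in> E" "B = c ` {u, v}"
      using B(1) by auto
    then show "B \<in> (\<lambda>e. c ` e) ` E"
      by blast
  qed
qed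

lemma minimum_coloring_card_colors:
  assumes "graph V E" "minimum_coloring V E c"
  shows "card E \<ge> card (c ` V) choose 2"
proof -
  have "card E \<ge> card ((\<lambda>e. c ` e) ` E)"
    using graph_finite_edges[OF assms(1)] by (rule card_image_le)
  moreover have "card {B. B \<subseteq> c ` V \<and> card B = 2} = card (c ` V) choose 2"
    using assms(1) n_subsets[of "c ` V" 2] unfolding graph_def by simp
  ultimately show ?thesis
    using minimum_coloring_edge_colors[OF assms] by simp
qed

lemma minimum_coloring_edge_colors_inj:
  assumes "graph V E" "minimum_coloring V E c" "card E \<le> card (c ` V) choose 2"
  shows "inj_on (\<lambda>e. c ` e) E"
proof (rule eq_card_imp_inj_on)
  show "finite E"
    using assms(1) by (rule graph_finite_edges)
  then have "card ((\<lambda>e. c ` e) ` E) \<le> card E"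
    by (rule card_image_le)
  moreover have "card ((\<lambda>e. c ` e) ` E) = card (c ` V) choose 2"
    using assms(1) minimum_coloring_edge_colors[OF assms(1,2)] n_subsets[of "c ` V" 2]
    unfolding graph_def by simp
  ultimately show "card ((\<lambda>e. c ` e) ` E) = card E"
    using assms(3) by simp
qed

text \<open>Injectivity of the colour-pair map says that at most one edge joins the classes of x and y.\<close>
lemma recolorable_vertex:
  assumes "proper_coloring V E c" "inj_on (\<lambda>e. c ` e) E"
    and "w1 \<noteq> w2" "c w1 = x" "c w2 = x" "x \<noteq> y"
  shows "\<exists>w\<in>{w1, w2}. \<forall>u\<in>V. {w, u} \<in> E \<longrightarrow> c u \<noteq> y"
proof (rule ccontr)
  assume "\<not> ?thesis"
  then obtain u1 u2 where u: "{w1, u1} \<in> E" "c u1 = y" "{w2, u2} \<in> E" "c u2 = y"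
    by blast
  then have "c ` {w1, u1} = c ` {w2, u2}"
    using assms(4,5) by simp
  then have "{w1, u1} = {w2, u2}"
    using inj_onD[OF assms(2) _ u(1,3)] by simp
  then have "w1 = u2"
    using assms(3) by (auto simp: doubleton_eq_iff)
  then show False
    using assms(4,6) u(4) by simp
qed

lemma shrink_color_class:
  assumes "proper_coloring V E c" "inj_on (\<lambda>e. c ` e) E"
    and "card (color_class V c x) \<ge> 2" "y \<in> c ` V" "x \<noteq> y"
  shows "\<exists>c'. proper_coloring V E c' \<and> c' ` V = c ` V
           \<and> card (color_class V c' x) < card (color_class V c x)"
proof -
  have fin: "finite (color_class V c x)"
    using assms(3) by (intro card_ge_0_finite) linarith
  obtain w1 where w1: "w1 \<in> color_class V c x"
    using assms(3) by fastforce
  then obtain w2 where w2: "w2 \<in> color_class V c x" "w1 \<noteq> w2"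
    using card_ge_2_ex_other[OF fin assms(3) w1] by blast
  obtain w where w: "w \<in> {w1, w2}" and no_y: "\<forall>u\<in>V. {w, u} \<in> E \<longrightarrow> c u \<noteq> y"
    using recolorable_vertex[OF assms(1,2) w2(2) _ _ assms(5)] w1 w2(1)
    unfolding color_class_def by blast
  obtain w' where "w' \<in> {w1, w2}" "w' \<noteq> w"
    using w w2(2) by blast
  then have ww': "w \<in> color_class V c x" "w' \<in> color_class V c x" "w' \<noteq> w"
    using w w1 w2(1) by auto
  define c' where "c' = c(w := y)"
  have "proper_coloring V E c'"
    unfolding c'_def using assms(1) no_y by (rule proper_coloring_fun_upd)
  moreover have "c' ` V = c ` V"
  proof
    show "c' ` V \<subseteq> c ` V"
      using assms(4) unfolding c'_def by auto
    show "c ` V \<subseteq> c' ` V"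
    proof
      fix z assume "z \<in> c ` V"
      then obtain v where v: "v \<in> V" "z = c v"
        by blast
      show "z \<in> c' ` V"
      proof (cases "v = w")
        case True
        then have "z = c' w'" "w' \<in> V"
          using v ww' unfolding c'_def color_class_def by auto
        then show ?thesis
          by blast
      next
        case False
        then have "z = c' v"
          using v unfolding c'_def by simp
        then show ?thesis
          using v(1) by blast
      qed
    qed
  qed
  moreover have "color_class V c' x = color_class V c x - {w}"
    unfolding color_class_def c'_def using assms(5) by auto
  then have "card (color_class V c' x) < card (color_class V c x)"
    using card_Diff1_less[OF fin ww'(1)] by simp
  ultimately show ?thesis
    by blast
qed

lemma minimum_coloring_singleton_class:
  assumes "graph V E" "minimum_coloring V E c"
    and "card E \<le> card (c ` V) choose 2" "card (c ` V) \<ge> 2"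
  shows "\<exists>c'. minimum_coloring V E c' \<and> card (c' ` V) = card (c ` V)
           \<and> (\<exists>x\<in>c' ` V. card (color_class V c' x) = 1)"
proof -
  define P where "P = (\<lambda>(c', x). minimum_coloring V E c' \<and> x \<in> c' ` V)"
  obtain x0 where "x0 \<in> c ` V"
    using assms(4) by fastforce
  then have "P (c, x0)"
    using assms(2) unfolding P_def by simp
  then obtain c' x where "P (c', x)" and least:
    "\<And>d y. P (d, y) \<Longrightarrow> card (color_class V c' x) \<le> card (color_class V d y)"
    using ex_has_least_nat[of P "(c, x0)" "\<lambda>(d, y). card (color_class V d y)"] by fastforce
  then have min': "minimum_coloring V E c'" and x: "x \<in> c' ` V"
    unfolding P_def by auto
  have same_card: "card (c' ` V) = card (c ` V)"
    using assms(2) min' unfolding minimum_coloring_def by (simp add: le_antisym)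
  have "card (color_class V c' x) = 1"
  proof (rule ccontr)
    assume "card (color_class V c' x) \<noteq> 1"
    moreover have "color_class V c' x \<noteq> {}" "finite (color_class V c' x)"
      using x assms(1) unfolding color_class_def graph_def by auto
    ultimately have class_ge_2: "card (color_class V c' x) \<ge> 2"
      using card_gt_0_iff[of "color_class V c' x"] by linarith
    have "finite (c' ` V)"
      using assms(1) unfolding graph_def by simp
    then obtain y where y: "y \<in> c' ` V" "y \<noteq> x"
      using card_ge_2_ex_other[of "c' ` V" x] assms(4) same_card x by auto
    have "proper_coloring V E c'"
      using min' unfolding minimum_coloring_def by blast
    moreover have "inj_on (\<lambda>e. c' ` e) E"
      using minimum_coloring_edge_colors_inj[OF assms(1) min'] assms(3) same_card by simp
    ultimately obtain d where d: "proper_coloring V E d" "d ` V = c' ` V"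
      "card (color_class V d x) < card (color_class V c' x)"
      using shrink_color_class[OF _ _ class_ge_2 y(1)] y(2) by blast
    have "minimum_coloring V E d"
      using d(1,2) min' unfolding minimum_coloring_def by simp
    then have "P (d, x)"
      using d(2) x unfolding P_def by simp
    then show False
      using least[of d x] d(3) by simp
  qed
  then show ?thesis
    using min' same_card x by blast
qed

lemma choose_two_le_imp_le:
  fixes n k :: nat
  assumes "n choose 2 \<le> (k + 1) choose 2"
  shows "n \<le> k + 1"
proof (rule ccontr)
  assume "\<not> n \<le> k + 1"
  then have "(k + 2) choose 2 \<le> n choose 2"
    by (intro binomial_right_mono) simp
  moreover have "(k + 2) choose 2 = (k + 1) + ((k + 1) choose 2)"
    by (simp add: numeral_2_eq_2)
  ultimately show False
    using assms by simp
qed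

theorem lemma3:
  fixes k :: nat and V :: "'a set" and E :: "'a set set"
  assumes "k > 0"
    and "graph V E"
    and "2 * card E \<le> k * (k + 1)"
  shows "\<exists>c. almost_k_coloring k V E c"
proof -
  obtain c where min: "minimum_coloring V E c"
    using minimum_coloring_exists[OF assms(2)] by blast
  show ?thesis
  proof (cases "card (c ` V) \<le> k")
    case True
    then show ?thesis
      using min unfolding almost_k_coloring_def k_coloring_def minimum_coloring_def by blast
  next
    case False
    have "2 * ((k + 1) choose 2) = k * (k + 1)"
      by (simp add: choose_two)
    then have E_bound: "card E \<le> (k + 1) choose 2"
      using assms(3) by simp
    then have "card (c ` V) \<le> k + 1"
      using minimum_coloring_card_colors[OF assms(2) min] choose_two_le_imp_le le_trans by blast
    then have n: "card (c ` V) = k + 1"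
      using False by simp
    obtain c' x where "minimum_coloring V E c'" "card (c' ` V) = k + 1"
      "x \<in> c' ` V" "card (color_class V c' x) = 1"
      using minimum_coloring_singleton_class[OF assms(2) min] E_bound n assms(1) by auto
    then have "k_coloring (k + 1) V E c'"
      unfolding k_coloring_def minimum_coloring_def by simp
    then show ?thesis
      unfolding almost_k_coloring_def using \<open>x \<in> c' ` V\<close> \<open>card (color_class V c' x) = 1\<close> by blast
  qed
qed

end
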